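(* If $Q=ABA'B'$ is a quadrilateral in $K^2$, possibly improper, then the pairs of opposite sides of $Q$ ($A,A'$ and $B,B'$) are $Q$-orthogonal, and the two diagonals of $Q$ are $Q$-orthogonal.
   Context: $K$ is a field of characteristic $\neq 2$. Every line $L$ in $K^2$ has an equation $tX-uY+v=0$ normalized so that $t=1$ if $u=0$ and $u=1$ if $u\neq 0$; coefficients denoted $t_L,u_L,v_L$. A quadrilateral $Q=ABA'B'$ consists of four distinct lines $A,B,A',B'$ (sides), not all through one point, with adjacent sides ($A,B$; $B,A'$; $A',B'$; $B',A$) not parallel; opposite sides may be parallel. Vertices: $A\cap B$, $B\cap A'$, $A'\cap B'$, $B'\cap A$; three sides may be concurrent, in which case two vertices coincide and $Q$ is improper. The diagonals are the line through $A\cap B$ and $A'\cap B'$ and the line through $B\cap A'$ and $B'\cap A$ (the lines through nonadjacent vertices). Let $\alpha=t_Au_Bu_{A'}u_{B'}-u_At_Bu_{A'}u_{B'}+u_Au_Bt_{A'}u_{B'}-u_Au_Bu_{A'}t_{B'}$, $\beta=t_Au_Bt_{A'}u_{B'}-u_At_Bu_{A'}t_{B'}$, $\gamma=t_At_Bt_{A'}u_{B'}-t_At_Bu_{A'}t_{B'}+t_Au_Bt_{A'}t_{B'}-u_At_Bt_{A'}t_{B'}$, and $\langle \mathbf v,\mathbf w\rangle_Q=\mathbf v^T\begin{pmatrix}\gamma&-\beta\\-\beta&\alpha\end{pmatrix}\mathbf w$. Lines $\ell_1,\ell_2$ are $Q$-orthogonal if $\langle (u_{\ell_1},t_{\ell_1}),(u_{\ell_2},t_{\ell_2})\rangle_Q=0$.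 *)

theory Defs
  imports Main
begin

text \<open>A line is represented by its normalized coefficient
  triple (t, u, v), standing for the equation t X - u Y + v = 0, with the
  normalization t = 1 if u = 0, and u = 1 if u is nonzero.\<close>

type_synonym 'a point = "'a \<times> 'a"
type_synonym 'a line = "'a \<times> 'a \<times> 'a"

definition tL :: "'a line \<Rightarrow> 'a" where "tL L = fst L"
definition uL :: "'a line \<Rightarrow> 'a" where "uL L = fst (snd L)"
definition vL :: "'a line \<Rightarrow> 'a" where "vL L = snd (snd L)"

definition normalized :: "'a::field line \<Rightarrow> bool" where
  "normalized L \<longleftrightarrow> (uL L = 0 \<and> tL L = 1) \<or> uL L = 1"

definition on_line :: "'a::field point \<Rightarrow> 'a line \<Rightarrow> bool" where
  "on_line p L \<longleftrightarrow> tL L * fst p - uL L * snd p + vL L = 0"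

definition parallel :: "'a::field line \<Rightarrow> 'a line \<Rightarrow> bool" where
  "parallel L M \<longleftrightarrow> tL L * uL M = uL L * tL M"

definition meet :: "'a::field line \<Rightarrow> 'a line \<Rightarrow> 'a point" where
  "meet L M = (THE p. on_line p L \<and> on_line p M)"

definition line_through :: "'a::field point \<Rightarrow> 'a point \<Rightarrow> 'a line" where
  "line_through p q = (THE L. normalized L \<and> on_line p L \<and> on_line q L)"

definition quadrilateral :: "'a::field line \<Rightarrow> 'a line \<Rightarrow> 'a line \<Rightarrow> 'a line \<Rightarrow> bool" where
  "quadrilateral A B A' B' \<longleftrightarrow>
     normalized A \<and> normalized B \<and> normalized A' \<and> normalized B' \<and>
     distinct [A, B, A', B'] \<and>
     \<not> (\<exists>p. on_line p A \<and> on_line p B \<and> on_line p A' \<and> on_line p B') \<and>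
     \<not> parallel A B \<and> \<not> parallel B A' \<and> \<not> parallel A' B' \<and> \<not> parallel B' A"

definition diag1 :: "'a::field line \<Rightarrow> 'a line \<Rightarrow> 'a line \<Rightarrow> 'a line \<Rightarrow> 'a line" where
  "diag1 A B A' B' = line_through (meet A B) (meet A' B')"

definition diag2 :: "'a::field line \<Rightarrow> 'a line \<Rightarrow> 'a line \<Rightarrow> 'a line \<Rightarrow> 'a line" where
  "diag2 A B A' B' = line_through (meet B A') (meet B' A)"

definition qalpha :: "'a::field line \<Rightarrow> 'a line \<Rightarrow> 'a line \<Rightarrow> 'a line \<Rightarrow> 'a" where
  "qalpha A B A' B' =
     tL A * uL B * uL A' * uL B' - uL A * tL B * uL A' * uL B'
   + uL A * uL B * tL A' * uL B' - uL A * uL B * uL A' * tL B'"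

definition qbeta :: "'a::field line \<Rightarrow> 'a line \<Rightarrow> 'a line \<Rightarrow> 'a line \<Rightarrow> 'a" where
  "qbeta A B A' B' = tL A * uL B * tL A' * uL B' - uL A * tL B * uL A' * tL B'"

definition qgamma :: "'a::field line \<Rightarrow> 'a line \<Rightarrow> 'a line \<Rightarrow> 'a line \<Rightarrow> 'a" where
  "qgamma A B A' B' =
     tL A * tL B * tL A' * uL B' - tL A * tL B * uL A' * tL B'
   + tL A * uL B * tL A' * tL B' - uL A * tL B * tL A' * tL B'"

definition qform :: "'a::field line \<Rightarrow> 'a line \<Rightarrow> 'a line \<Rightarrow> 'a line \<Rightarrow> 'a \<times> 'a \<Rightarrow> 'a \<times> 'a \<Rightarrow> 'a" where
  "qform A B A' B' v w =
     fst v * (qgamma A B A' B' * fst w - qbeta A B A' B' * snd w)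
   + snd v * (- qbeta A B A' B' * fst w + qalpha A B A' B' * snd w)"

definition q_orthogonal :: "'a::field line \<Rightarrow> 'a line \<Rightarrow> 'a line \<Rightarrow> 'a line \<Rightarrow> 'a line \<Rightarrow> 'a line \<Rightarrow> bool" where
  "q_orthogonal A B A' B' l1 l2 \<longleftrightarrow>
     qform A B A' B' (uL l1, tL l1) (uL l2, tL l2) = 0"

end

theory Submission
  imports Defs "HOL-Library.Product_Plus"
begin

text \<open>That the opposite sides are Q-orthogonal is a polynomial identity in the
  coefficients of the four lines. For the diagonals, let \<open>p, r, q, s\<close> be the vertices
  \<open>A \<inter> B, B \<inter> A', A' \<inter> B', B' \<inter> A\<close>. The edge vectors \<open>p - s\<close>, \<open>r - p\<close>, \<open>q - r\<close>,
  \<open>s - q\<close> are multiples of the direction vectors \<open>(u, t)\<close> of \<open>A, B, A', B'\<close> (the zero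
  multiple when two vertices of an improper quadrilateral coincide), so opposite edges are
  Q-orthogonal. For any symmetric bilinear form the four-point identity
  \<open>\<langle>q - p, s - r\<rangle> = \<langle>r - p, s - q\<rangle> - \<langle>p - s, q - r\<rangle>\<close> then makes the diagonals
  Q-orthogonal.\<close>

lemma line_eqI:
  assumes "tL L = tL M" "uL L = uL M" "vL L = vL M"
  shows "L = M"
  using assms by (simp add: tL_def uL_def vL_def prod_eq_iff)

lemma normalized_direction_nonzero: "normalized L \<Longrightarrow> (uL L, tL L) \<noteq> (0, 0)"
  by (auto simp: normalized_def)

lemma cross_eq_if_nontrivial_solution:
  fixes a b c d x y :: "'a::field"
  assumes "a * x = b * y" "c * x = d * y" "(x, y) \<noteq> (0, 0)"
  shows "a * d = b * c"
proof -
  have "x * (a * d - b * c) = d * (a * x) - b * (c * x)"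
    by (simp add: algebra_simps)
  also have "\<dots> = d * (b * y) - b * (d * y)"
    by (simp only: assms(1,2))
  finally have x: "x * (a * d - b * c) = 0"
    by (simp add: algebra_simps)
  have "y * (a * d - b * c) = a * (d * y) - c * (b * y)"
    by (simp add: algebra_simps)
  also have "\<dots> = a * (c * x) - c * (a * x)"
    by (simp only: assms(1,2)[symmetric])
  finally have "y * (a * d - b * c) = 0"
    by (simp add: algebra_simps)
  with x assms(3) show ?thesis by auto
qed

lemma proportional_if_cross_eq:
  fixes a b x y :: "'a::field"
  assumes "(x, y) \<noteq> (0, 0)" "y * a = x * b"
  shows "\<exists>c. a = c * x \<and> b = c * y"
proof (cases "x = 0")
  case True
  with assms show ?thesis by (intro exI[of _ "b / y"]) auto
next
  case False
  with assms show ?thesis by (intro exI[of _ "a / x"]) (auto simp: field_simps)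
qed

lemma on_line_cross:
  assumes "on_line p L" "on_line q L"
  shows "tL L * fst (q - p) = uL L * snd (q - p)"
proof -
  have "tL L * fst (q - p) - uL L * snd (q - p)
      = (tL L * fst q - uL L * snd q + vL L) - (tL L * fst p - uL L * snd p + vL L)"
    by (simp add: algebra_simps)
  with assms show ?thesis by (simp add: on_line_def)
qed

lemma on_line_divide:
  "D \<noteq> 0 \<Longrightarrow> on_line (x / D, y / D) L \<longleftrightarrow> tL L * x - uL L * y + vL L * D = 0"
  by (simp add: on_line_def field_simps)

lemma parallel_if_two_common_points:
  assumes "p \<noteq> q" "on_line p L" "on_line q L" "on_line p M" "on_line q M"
  shows "parallel L M"
proof -
  from assms(1) have "(fst (q - p), snd (q - p)) \<noteq> (0, 0)" by (auto simp: prod_eq_iff)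
  with on_line_cross[OF assms(2,3)] on_line_cross[OF assms(4,5)] show ?thesis
    unfolding parallel_def by (rule cross_eq_if_nontrivial_solution)
qed

lemma ex1_common_point:
  assumes "\<not> parallel L M"
  shows "\<exists>!p. on_line p L \<and> on_line p M"
proof -
  define D where "D = uL L * tL M - tL L * uL M"
  have "D \<noteq> 0" using assms by (simp add: D_def parallel_def)
  \<comment> \<open>Cramer's rule\<close>
  then have "on_line ((vL L * uL M - uL L * vL M) / D, (tL M * vL L - tL L * vL M) / D) N"
    if "N = L \<or> N = M" for N
    using that by (auto simp: on_line_divide D_def algebra_simps)
  with assms parallel_if_two_common_points show ?thesis by blast
qed

lemma on_line_meet:
  assumes "\<not> parallel L M"
  shows "on_line (meet L M) L" "on_line (meet L M) M"
  using theI'[OF ex1_common_point[OF assms]] by (simp_all add: meet_def)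

lemma normalized_eq_if_parallel:
  assumes "normalized L" "normalized M" "parallel L M" "on_line p L" "on_line p M"
  shows "L = M"
proof -
  have "tL L = tL M \<and> uL L = uL M"
    using assms(1-3) by (auto simp: normalized_def parallel_def)
  moreover have "vL L = vL M"
    using calculation assms(4,5) unfolding on_line_def by (metis add_left_cancel)
  ultimately show ?thesis by (simp add: line_eqI)
qed

lemma ex1_normalized_line_through:
  assumes "p \<noteq> q"
  shows "\<exists>!L. normalized L \<and> on_line p L \<and> on_line q L"
proof -
  obtain L where "normalized L" "on_line p L" "on_line q L"
  proof (cases "fst p = fst q")
    case True
    then show ?thesis
      by (intro that[of "(1, 0, - fst p)"]) (simp_all add: normalized_def on_line_def tL_def uL_def vL_def)
  next
    case False
    let ?m = "(snd q - snd p) / (fst q - fst p)"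
    from False show ?thesis
      by (intro that[of "(?m, 1, snd p - ?m * fst p)"])
        (simp_all add: normalized_def on_line_def tL_def uL_def vL_def field_simps)
  qed
  with assms show ?thesis
    by (metis normalized_eq_if_parallel parallel_if_two_common_points)
qed

lemma on_line_through:
  assumes "p \<noteq> q"
  shows "on_line p (line_through p q)" "on_line q (line_through p q)"
  using theI'[OF ex1_normalized_line_through[OF assms]] by (simp_all add: line_through_def)

lemma qform_scale:
  "qform A B A' B' (c * x, c * y) (d * z, d * w) = c * d * qform A B A' B' (x, y) (z, w)"
  by (simp add: qform_def algebra_simps)

lemma q_orthogonal_opposite_sides:
  "q_orthogonal A B A' B' A A'" "q_orthogonal A B A' B' B B'"
  by (simp_all add: q_orthogonal_def qform_def qalpha_def qbeta_def qgamma_def algebra_simps)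

lemma qform_four_points:
  "qform A B A' B' (q - p) (s - r) = qform A B A' B' (r - p) (s - q) - qform A B A' B' (p - s) (q - r)"
  by (simp add: qform_def algebra_simps)

lemma on_line_diff_direction:
  assumes "normalized L" "on_line p L" "on_line q L"
  shows "\<exists>c. q - p = (c * uL L, c * tL L)"
  using proportional_if_cross_eq[OF normalized_direction_nonzero[OF assms(1)]
      on_line_cross[OF assms(2,3)]]
  by (metis prod.collapse)

lemma line_through_direction:
  assumes "p \<noteq> q"
  shows "\<exists>c. (uL (line_through p q), tL (line_through p q)) = (c * fst (q - p), c * snd (q - p))"
proof -
  have "(fst (q - p), snd (q - p)) \<noteq> (0, 0)" using assms by (auto simp: prod_eq_iff)
  moreover have "snd (q - p) * uL (line_through p q) = fst (q - p) * tL (line_through p q)"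
    using on_line_cross[OF on_line_through[OF assms]] by (simp only: mult.commute)
  ultimately show ?thesis by (simp add: proportional_if_cross_eq)
qed

lemma qform_edges_if_q_orthogonal:
  assumes "q_orthogonal A B A' B' L M" "normalized L" "normalized M"
    and "on_line p L" "on_line q L" "on_line r M" "on_line s M"
  shows "qform A B A' B' (q - p) (s - r) = 0"
proof -
  obtain c d where "q - p = (c * uL L, c * tL L)" "s - r = (d * uL M, d * tL M)"
    using on_line_diff_direction assms(2-7) by metis
  with assms(1) show ?thesis
    by (simp only: qform_scale q_orthogonal_def) simp
qed

lemma q_orthogonal_lines_through:
  assumes "qform A B A' B' (q - p) (s - r) = 0" "p \<noteq> q" "r \<noteq> s"
  shows "q_orthogonal A B A' B' (line_through p q) (line_through r s)"
proof -
  obtain c d where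
    "(uL (line_through p q), tL (line_through p q)) = (c * fst (q - p), c * snd (q - p))"
    "(uL (line_through r s), tL (line_through r s)) = (d * fst (s - r), d * snd (s - r))"
    using line_through_direction assms(2,3) by metis
  with assms(1) show ?thesis
    by (simp only: q_orthogonal_def qform_scale prod.collapse) simp
qed

theorem proposition2p5:
  fixes A B A' B' :: "'a::field line"
  assumes char: "(2::'a) \<noteq> 0"
    and Q: "quadrilateral A B A' B'"
  shows "q_orthogonal A B A' B' A A' \<and> q_orthogonal A B A' B' B B' \<and>
         q_orthogonal A B A' B' (diag1 A B A' B') (diag2 A B A' B')"
proof -
  from Q have par: "\<not> parallel A B" "\<not> parallel B A'" "\<not> parallel A' B'" "\<not> parallel B' A"
    and norm: "normalized A" "normalized B" "normalized A'" "normalized B'"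
    and no_common_point: "\<not> (\<exists>p. on_line p A \<and> on_line p B \<and> on_line p A' \<and> on_line p B')"
    by (auto simp: quadrilateral_def)
  define p r q s where "p = meet A B" and "r = meet B A'" and "q = meet A' B'" and "s = meet B' A"
  have on: "on_line p A" "on_line p B" "on_line r B" "on_line r A'"
    "on_line q A'" "on_line q B'" "on_line s B'" "on_line s A"
    unfolding p_def r_def q_def s_def by (simp_all add: on_line_meet par)
  have sides: "q_orthogonal A B A' B' A A'" "q_orthogonal A B A' B' B B'"
    by (rule q_orthogonal_opposite_sides)+
  have "qform A B A' B' (p - s) (q - r) = 0"
    by (rule qform_edges_if_q_orthogonal[OF sides(1) norm(1,3) on(8,1,4,5)])
  moreover have "qform A B A' B' (r - p) (s - q) = 0"
    by (rule qform_edges_if_q_orthogonal[OF sides(2) norm(2,4) on(2,3,6,7)])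
  ultimately have "qform A B A' B' (q - p) (s - r) = 0"
    by (simp add: qform_four_points[of A B A' B' q p s r])
  moreover have "p \<noteq> q" "r \<noteq> s"
    using no_common_point on by metis+
  ultimately have "q_orthogonal A B A' B' (diag1 A B A' B') (diag2 A B A' B')"
    unfolding diag1_def diag2_def p_def r_def q_def s_def by (rule q_orthogonal_lines_through)
  with sides show ?thesis by blast
qed

end
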